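(* Let $r>1$ and let $k,\ell,m$ be positive integers with $m\ge 12r$. Let $x_0\in R_1\cup\dots\cup R_\ell$ be an arbitrary reservoir vertex of the $(k,\ell,m)$-megastar and run the Moran process with fitness $r$ on the megastar with initial mutant $x_0$. Then the process goes extinct with probability at least $1/(26r^2\ell)$.
   Context: Moran process: given a directed graph $G$ and fitness $r$, one vertex $x_0$ is a mutant, the rest non-mutants. At each step a vertex $v$ is chosen with probability proportional to fitness (mutants $r$, non-mutants $1$), an out-neighbour $w$ of $v$ is chosen uniformly at random and the state of $v$ is copied to $w$. Extinction: eventually no vertex is a mutant. The $(k,\ell,m)$-megastar: disjoint union of reservoirs $R_1,\dots,R_\ell$ (size $m$), cliques $K_1,\dots,K_\ell$ (size $k$), feeders $a_1,\dots,a_\ell$, and centre $v^*$; edges from $v^*$ to all reservoir vertices, from each vertex of $R_i$ to $a_i$, from $a_i$ to each vertex of $K_i$, both directions between distinct vertices of each $K_i$, and from every clique vertex to $v^*$. *)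

theory Defs
  imports Complex_Main
begin

text \<open>A directed graph is given by a finite vertex set V and an edge set E.
  States of the Moran process are the sets of mutant vertices S \<subseteq> V.\<close>

definition out_nbrs :: "('a \<times> 'a) set \<Rightarrow> 'a \<Rightarrow> 'a set" where
  "out_nbrs E v = {w. (v, w) \<in> E}"

definition fitness :: "real \<Rightarrow> 'a set \<Rightarrow> 'a \<Rightarrow> real" where
  "fitness r S v = (if v \<in> S then r else 1)"

definition total_fitness :: "'a set \<Rightarrow> real \<Rightarrow> 'a set \<Rightarrow> real" where
  "total_fitness V r S = (\<Sum>v\<in>V. fitness r S v)"

definition moran_update :: "'a set \<Rightarrow> 'a \<Rightarrow> 'a \<Rightarrow> 'a set" where
  "moran_update S v w = (if v \<in> S then insert w S else S - {w})"

definition moran_trans :: "'a set \<Rightarrow> ('a \<times> 'a) set \<Rightarrow> real \<Rightarrow> 'a set \<Rightarrow> 'a set \<Rightarrow> real" where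
  "moran_trans V E r S S' =
     (\<Sum>v\<in>V. \<Sum>w\<in>out_nbrs E v.
        (if moran_update S v w = S' then
           (fitness r S v / total_fitness V r S) * (1 / real (card (out_nbrs E v)))
         else 0))"

fun moran_ext_within :: "'a set \<Rightarrow> ('a \<times> 'a) set \<Rightarrow> real \<Rightarrow> nat \<Rightarrow> 'a set \<Rightarrow> real" where
  "moran_ext_within V E r 0 S = (if S = {} then 1 else 0)"
| "moran_ext_within V E r (Suc n) S =
     (\<Sum>S'\<in>Pow V. moran_trans V E r S S' * moran_ext_within V E r n S')"

definition moran_extinction :: "'a set \<Rightarrow> ('a \<times> 'a) set \<Rightarrow> real \<Rightarrow> 'a set \<Rightarrow> real" where
  "moran_extinction V E r S = (SUP n. moran_ext_within V E r n S)"

text \<open>Indices are 0-based: reservoirs R_i = {Res i j | j < m}, cliques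
  K_i = {Cl i j | j < k}, feeders Feeder i, for i < l; Centre is v*.\<close>
datatype mvert = Centre | Res nat nat | Feeder nat | Cl nat nat

definition megastar_V :: "nat \<Rightarrow> nat \<Rightarrow> nat \<Rightarrow> mvert set" where
  "megastar_V k l m =
     {Centre} \<union> {Res i j | i j. i < l \<and> j < m} \<union> {Feeder i | i. i < l}
     \<union> {Cl i j | i j. i < l \<and> j < k}"

definition megastar_E :: "nat \<Rightarrow> nat \<Rightarrow> nat \<Rightarrow> (mvert \<times> mvert) set" where
  "megastar_E k l m =
     {(Centre, Res i j) | i j. i < l \<and> j < m}
     \<union> {(Res i j, Feeder i) | i j. i < l \<and> j < m}
     \<union> {(Feeder i, Cl i j) | i j. i < l \<and> j < k}
     \<union> {(Cl i j, Cl i j') | i j j'. i < l \<and> j < k \<and> j' < k \<and> j \<noteq> j'}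
     \<union> {(Cl i j, Centre) | i j. i < l \<and> j < k}"

end

theory Submission
  imports Defs
begin

text \<open>Let x be the initial mutant, in reservoir R_i, and a the feeder a_i; write W for the
  total fitness of the current state. Only the states {x} and {a, x} are tracked. From {x} the
  centre (fitness 1) overwrites x with probability 1/(l m W), while x infects a with probability
  r/W. From {a, x} the m - 1 non-mutant vertices of R_i overwrite a with probability (m - 1)/W,
  which dominates every other change. Consequently h {x} = c = 1/(26 r^2 l),
  h {a, x} = c (m - 1)/(m - 1 + r + 1/(l m)) and h = 0 elsewhere is subharmonic on these two
  states, counting extinction as value 1. As the chain leaves the two states with positive
  probability in each step, the n-step extinction probabilities satisfy e_n \<ge> h - \<rho>^n for
  some \<rho> < 1, and the bound follows in the limit.\<close>

definition repro_prob :: "'a set \<Rightarrow> ('a \<times> 'a) set \<Rightarrow> real \<Rightarrow> 'a set \<Rightarrow> 'a \<Rightarrow> 'a \<Rightarrow> real" where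
  "repro_prob V E r S v w = (fitness r S v / total_fitness V r S) * (1 / real (card (out_nbrs E v)))"

definition change_prob :: "'a set \<Rightarrow> ('a \<times> 'a) set \<Rightarrow> real \<Rightarrow> 'a set \<Rightarrow> 'a \<Rightarrow> real" where
  "change_prob V E r S v =
     (\<Sum>w\<in>out_nbrs E v. if moran_update S v w \<noteq> S then repro_prob V E r S v w else 0)"

lemma moran_trans_eq_sum_repro_prob:
  "moran_trans V E r S S' =
     (\<Sum>v\<in>V. \<Sum>w\<in>out_nbrs E v. if moran_update S v w = S' then repro_prob V E r S v w else 0)"
  unfolding moran_trans_def repro_prob_def by simp

locale moran_graph =
  fixes V :: "'a set" and E :: "('a \<times> 'a) set" and r :: real
  assumes finite_V: "finite V" and V_nonempty: "V \<noteq> {}" and edges_in_V: "E \<subseteq> V \<times> V"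
    and out_nbrs_nonempty: "\<And>v. v \<in> V \<Longrightarrow> out_nbrs E v \<noteq> {}"
    and r_pos: "0 < r"
begin

lemma finite_out_nbrs: "finite (out_nbrs E v)"
  using edges_in_V finite_V by (auto simp: out_nbrs_def intro: finite_subset)

lemma total_fitness_pos: "0 < total_fitness V r S"
  unfolding total_fitness_def using finite_V V_nonempty r_pos
  by (intro sum_pos) (auto simp: fitness_def)

lemma repro_prob_nonneg: "0 \<le> repro_prob V E r S v w"
  unfolding repro_prob_def using total_fitness_pos[of S] r_pos by (simp add: fitness_def)

lemma sum_repro_prob_out_nbrs:
  assumes "v \<in> V"
  shows "(\<Sum>w\<in>out_nbrs E v. repro_prob V E r S v w) = fitness r S v / total_fitness V r S"
proof -
  have "card (out_nbrs E v) > 0"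
    using finite_out_nbrs out_nbrs_nonempty[OF assms] by (simp add: card_gt_0_iff)
  then show ?thesis unfolding repro_prob_def by simp
qed

lemma sum_repro_prob: "(\<Sum>v\<in>V. \<Sum>w\<in>out_nbrs E v. repro_prob V E r S v w) = 1"
proof -
  have "(\<Sum>v\<in>V. \<Sum>w\<in>out_nbrs E v. repro_prob V E r S v w) =
      (\<Sum>v\<in>V. fitness r S v) / total_fitness V r S"
    by (simp add: sum_repro_prob_out_nbrs sum_divide_distrib)
  then show ?thesis using total_fitness_pos[of S] by (simp add: total_fitness_def)
qed

lemma moran_trans_nonneg: "0 \<le> moran_trans V E r S S'"
  unfolding moran_trans_eq_sum_repro_prob by (intro sum_nonneg) (simp add: repro_prob_nonneg)

lemma sum_moran_trans_le_one:
  assumes "T \<subseteq> Pow V"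
  shows "(\<Sum>S'\<in>T. moran_trans V E r S S') \<le> 1"
proof -
  have "(\<Sum>S'\<in>T. moran_trans V E r S S') =
      (\<Sum>v\<in>V. \<Sum>w\<in>out_nbrs E v. \<Sum>S'\<in>T. if moran_update S v w = S' then repro_prob V E r S v w else 0)"
    unfolding moran_trans_eq_sum_repro_prob by (subst sum.swap) (simp add: sum.swap[of _ T])
  also have "\<dots> \<le> (\<Sum>v\<in>V. \<Sum>w\<in>out_nbrs E v. repro_prob V E r S v w)"
    using finite_subset[OF assms] finite_V
    by (intro sum_mono) (auto simp: sum.delta repro_prob_nonneg)
  finally show ?thesis by (simp add: sum_repro_prob)
qed

lemma sum_moran_trans_less_one:
  assumes "T \<subseteq> Pow V" and "S' \<in> Pow V - T" and "0 < moran_trans V E r S S'"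
  shows "(\<Sum>S''\<in>T. moran_trans V E r S S'') < 1"
proof -
  have "finite T" using assms(1) finite_V by (meson finite_Pow_iff finite_subset)
  then have "(\<Sum>S''\<in>T. moran_trans V E r S S'') + moran_trans V E r S S' \<le> 1"
    using sum_moran_trans_le_one[of "insert S' T" S] assms by simp
  then show ?thesis using assms(3) by linarith
qed

lemma moran_trans_ge_repro_prob:
  assumes "v \<in> V" and "w \<in> out_nbrs E v" and "moran_update S v w = S'"
  shows "repro_prob V E r S v w \<le> moran_trans V E r S S'"
proof -
  have "repro_prob V E r S v w \<le>
      (\<Sum>w\<in>out_nbrs E v. if moran_update S v w = S' then repro_prob V E r S v w else 0)"
    using member_le_sum[of w "out_nbrs E v"
        "\<lambda>w. if moran_update S v w = S' then repro_prob V E r S v w else 0"]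
      assms finite_out_nbrs repro_prob_nonneg by auto
  also have "\<dots> \<le> moran_trans V E r S S'"
    unfolding moran_trans_eq_sum_repro_prob using assms(1) finite_V
    by (intro member_le_sum) (auto intro: sum_nonneg simp: repro_prob_nonneg)
  finally show ?thesis .
qed

lemma moran_trans_ge_sum_fitness:
  assumes "A \<subseteq> V" and "\<And>v w. v \<in> A \<Longrightarrow> w \<in> out_nbrs E v \<Longrightarrow> moran_update S v w = S'"
  shows "(\<Sum>v\<in>A. fitness r S v / total_fitness V r S) \<le> moran_trans V E r S S'"
proof -
  have "(\<Sum>v\<in>A. fitness r S v / total_fitness V r S) =
      (\<Sum>v\<in>A. \<Sum>w\<in>out_nbrs E v. if moran_update S v w = S' then repro_prob V E r S v w else 0)"
    using assms by (intro sum.cong) (auto simp: sum_repro_prob_out_nbrs[symmetric])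
  also have "\<dots> \<le> moran_trans V E r S S'"
    unfolding moran_trans_eq_sum_repro_prob using assms(1) finite_V
    by (intro sum_mono2) (auto intro: sum_nonneg simp: repro_prob_nonneg)
  finally show ?thesis .
qed

lemma moran_trans_self:
  assumes "B \<subseteq> V" and "\<And>v w. v \<in> V - B \<Longrightarrow> w \<in> out_nbrs E v \<Longrightarrow> moran_update S v w = S"
  shows "moran_trans V E r S S = 1 - (\<Sum>v\<in>B. change_prob V E r S v)"
proof -
  have "moran_trans V E r S S + (\<Sum>v\<in>V. change_prob V E r S v) = 1"
    unfolding moran_trans_eq_sum_repro_prob change_prob_def sum.distrib[symmetric]
    by (subst sum_repro_prob[symmetric, of S]) (intro sum.cong; simp)
  moreover have "(\<Sum>v\<in>V. change_prob V E r S v) = (\<Sum>v\<in>B. change_prob V E r S v)"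
    unfolding change_prob_def using assms finite_V by (intro sum.mono_neutral_right) auto
  ultimately show ?thesis by simp
qed

lemma change_prob_le:
  assumes "v \<in> V"
  shows "change_prob V E r S v \<le> fitness r S v / total_fitness V r S"
  unfolding change_prob_def sum_repro_prob_out_nbrs[OF assms, symmetric]
  by (intro sum_mono) (simp add: repro_prob_nonneg)

lemma moran_ext_within_bounds: "0 \<le> moran_ext_within V E r n S \<and> moran_ext_within V E r n S \<le> 1"
proof (induction n arbitrary: S)
  case 0
  then show ?case by simp
next
  case (Suc n)
  have "moran_ext_within V E r (Suc n) S \<le> (\<Sum>S'\<in>Pow V. moran_trans V E r S S')"
    using Suc moran_trans_nonneg by (simp add: sum_mono mult_left_le)
  also have "\<dots> \<le> 1" by (simp add: sum_moran_trans_le_one)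
  finally show ?case using Suc moran_trans_nonneg by (simp add: sum_nonneg)
qed

lemma moran_ext_within_Suc_ge:
  assumes "T \<subseteq> Pow V"
  shows "(\<Sum>S'\<in>T. moran_trans V E r S S' * moran_ext_within V E r n S') \<le>
    moran_ext_within V E r (Suc n) S"
  using assms finite_V moran_trans_nonneg moran_ext_within_bounds
  by simp (rule sum_mono2, auto)

lemma moran_ext_within_empty: "moran_ext_within V E r n {} = 1"
proof (induction n)
  case 0
  then show ?case by simp
next
  case (Suc n)
  have "moran_trans V E r {} {} = 1"
    using moran_trans_self[of "{}" "{}"] by (simp add: moran_update_def)
  then have "1 \<le> moran_ext_within V E r (Suc n) {}"
    using moran_ext_within_Suc_ge[of "{{}}" "{}" n] Suc by simp
  then show ?case using moran_ext_within_bounds[of "Suc n" "{}"] by simp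
qed

lemma moran_ext_within_le_extinction: "moran_ext_within V E r n S \<le> moran_extinction V E r S"
  unfolding moran_extinction_def
  by (rule cSUP_upper) (auto intro: bdd_aboveI2[where M = 1] simp: moran_ext_within_bounds)

lemma extinction_ge_minorant:
  assumes T: "T \<subseteq> Pow V" and "{} \<notin> T"
    and leaves: "\<And>S. S \<in> T \<Longrightarrow> (\<Sum>S'\<in>T. moran_trans V E r S S') < 1"
    and le_one: "\<And>S. S \<in> T \<Longrightarrow> h S \<le> 1"
    and subharmonic: "\<And>S. S \<in> T \<Longrightarrow>
      h S \<le> moran_trans V E r S {} + (\<Sum>S'\<in>T. moran_trans V E r S S' * h S')"
    and "S \<in> T"
  shows "h S \<le> moran_extinction V E r S"
proof -
  have "finite T" using T finite_V by (meson finite_Pow_iff finite_subset)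
  define \<rho> where "\<rho> = Max ((\<lambda>S. \<Sum>S'\<in>T. moran_trans V E r S S') ` T)"
  have stay_le: "(\<Sum>S'\<in>T. moran_trans V E r S S') \<le> \<rho>" if "S \<in> T" for S
    using \<open>finite T\<close> that by (simp add: \<rho>_def)
  have "\<rho> < 1"
    using \<open>finite T\<close> \<open>S \<in> T\<close> leaves unfolding \<rho>_def by (subst Max_less_iff) auto
  have "0 \<le> \<rho>"
    using stay_le[OF \<open>S \<in> T\<close>] sum_nonneg[of T "moran_trans V E r S"] moran_trans_nonneg by force
  have approx: "h S - \<rho> ^ n \<le> moran_ext_within V E r n S" if "S \<in> T" for n S
    using that
  proof (induction n arbitrary: S)
    case 0
    then show ?case using le_one \<open>{} \<notin> T\<close> by auto
  next
    case (Suc n)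
    let ?P = "moran_trans V E r S" and ?e = "moran_ext_within V E r n"
    have "?P {} + (\<Sum>S'\<in>T. ?P S' * h S') - \<rho> ^ n * \<rho> \<le>
        ?P {} + (\<Sum>S'\<in>T. ?P S' * h S') - \<rho> ^ n * (\<Sum>S'\<in>T. ?P S')"
      using stay_le[OF Suc.prems] \<open>0 \<le> \<rho>\<close> by (simp add: mult_left_mono)
    also have "\<dots> = ?P {} * ?e {} + (\<Sum>S'\<in>T. ?P S' * (h S' - \<rho> ^ n))"
      by (simp add: moran_ext_within_empty sum_distrib_left sum_subtractf algebra_simps)
    also have "\<dots> \<le> ?P {} * ?e {} + (\<Sum>S'\<in>T. ?P S' * ?e S')"
      using Suc.IH by (intro add_left_mono sum_mono mult_left_mono) (auto simp: moran_trans_nonneg)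
    also have "\<dots> = (\<Sum>S'\<in>insert {} T. ?P S' * ?e S')"
      using \<open>finite T\<close> \<open>{} \<notin> T\<close> by simp
    also have "\<dots> \<le> moran_ext_within V E r (Suc n) S"
      using T by (intro moran_ext_within_Suc_ge) auto
    finally show ?case using subharmonic[OF Suc.prems] by (simp add: mult.commute)
  qed
  have "(\<lambda>n. h S - \<rho> ^ n) \<longlonglongrightarrow> h S - 0"
    using \<open>0 \<le> \<rho>\<close> \<open>\<rho> < 1\<close> by (intro tendsto_diff tendsto_const LIMSEQ_power_zero) auto
  moreover have "h S - \<rho> ^ n \<le> moran_extinction V E r S" for n
    using approx[OF \<open>S \<in> T\<close>] moran_ext_within_le_extinction by (rule order_trans)
  ultimately show ?thesis by (intro LIMSEQ_le_const2) auto
qed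

end

lemma finite_megastar_V: "finite (megastar_V k l m)"
proof -
  have "{Res i j | i j. i < l \<and> j < m} = case_prod Res ` ({..<l} \<times> {..<m})"
    and "{Cl i j | i j. i < l \<and> j < k} = case_prod Cl ` ({..<l} \<times> {..<k})"
    and "{Feeder i | i. i < l} = Feeder ` {..<l}"
    by auto
  then show ?thesis unfolding megastar_V_def by simp
qed

lemma megastar_E_subset: "megastar_E k l m \<subseteq> megastar_V k l m \<times> megastar_V k l m"
  unfolding megastar_E_def megastar_V_def by auto

lemma out_nbrs_megastar_Centre:
  "out_nbrs (megastar_E k l m) Centre = {Res i j | i j. i < l \<and> j < m}"
  unfolding out_nbrs_def megastar_E_def by auto

lemma card_out_nbrs_megastar_Centre: "card (out_nbrs (megastar_E k l m) Centre) = l * m"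
proof -
  have "{Res i j | i j. i < l \<and> j < m} = case_prod Res ` ({..<l} \<times> {..<m})" by auto
  then show ?thesis
    unfolding out_nbrs_megastar_Centre by (simp add: card_image inj_on_def)
qed

lemma out_nbrs_megastar_Res:
  "i < l \<Longrightarrow> j < m \<Longrightarrow> out_nbrs (megastar_E k l m) (Res i j) = {Feeder i}"
  unfolding out_nbrs_def megastar_E_def by auto

lemma Res_in_out_nbrs_megastar: "Res i j \<in> out_nbrs (megastar_E k l m) v \<Longrightarrow> v = Centre"
  unfolding out_nbrs_def megastar_E_def by auto

lemma Feeder_in_out_nbrs_megastar:
  "Feeder i \<in> out_nbrs (megastar_E k l m) v \<Longrightarrow> \<exists>j<m. v = Res i j"
  unfolding out_nbrs_def megastar_E_def by auto

lemma out_nbrs_megastar_nonempty: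
  assumes "0 < k" "0 < l" "0 < m" and "v \<in> megastar_V k l m"
  shows "out_nbrs (megastar_E k l m) v \<noteq> {}"
proof -
  have "(v, w) \<in> megastar_E k l m"
    if "w = (case v of Centre \<Rightarrow> Res 0 0 | Res i j \<Rightarrow> Feeder i | Feeder i \<Rightarrow> Cl i 0 | Cl i j \<Rightarrow> Centre)"
    for w
    using assms that by (cases v) (auto simp: megastar_V_def megastar_E_def)
  then show ?thesis by (auto simp: out_nbrs_def)
qed

lemma moran_graph_megastar:
  "0 < k \<Longrightarrow> 0 < l \<Longrightarrow> 0 < m \<Longrightarrow> 0 < r \<Longrightarrow>
    moran_graph (megastar_V k l m) (megastar_E k l m) r"
  using finite_megastar_V megastar_E_subset out_nbrs_megastar_nonempty
  by unfold_locales (auto simp: megastar_V_def)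

locale megastar_reservoir =
  fixes k l m i j :: nat and r :: real
  assumes k_pos: "0 < k" and l_pos: "0 < l" and m_pos: "0 < m" and r_gt_1: "1 < r"
    and i_less: "i < l" and j_less: "j < m"

sublocale megastar_reservoir \<subseteq> moran_graph "megastar_V k l m" "megastar_E k l m" r
  using moran_graph_megastar k_pos l_pos m_pos r_gt_1 by simp

context megastar_reservoir
begin

lemma Res_in_V: "Res i j \<in> megastar_V k l m"
  and Feeder_in_V: "Feeder i \<in> megastar_V k l m"
  and Centre_in_V: "Centre \<in> megastar_V k l m"
  using i_less j_less by (auto simp: megastar_V_def)

lemma Res_in_out_nbrs_Centre: "Res i j \<in> out_nbrs (megastar_E k l m) Centre"
  using i_less j_less by (simp add: out_nbrs_megastar_Centre)

lemma repro_prob_Centre_Res: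
  "Centre \<notin> S \<Longrightarrow> repro_prob (megastar_V k l m) (megastar_E k l m) r S Centre (Res i j) =
     1 / (real l * real m) / total_fitness (megastar_V k l m) r S"
  unfolding repro_prob_def card_out_nbrs_megastar_Centre by (simp add: fitness_def)

lemma change_prob_Centre:
  assumes "Centre \<notin> S" and "S \<inter> out_nbrs (megastar_E k l m) Centre = {Res i j}"
  shows "change_prob (megastar_V k l m) (megastar_E k l m) r S Centre =
    1 / (real l * real m) / total_fitness (megastar_V k l m) r S"
proof -
  have "change_prob (megastar_V k l m) (megastar_E k l m) r S Centre =
      (\<Sum>w\<in>out_nbrs (megastar_E k l m) Centre.
         if w = Res i j then repro_prob (megastar_V k l m) (megastar_E k l m) r S Centre w else 0)"
    unfolding change_prob_def using assms by (intro sum.cong) (auto simp: moran_update_def)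
  then show ?thesis
    using Res_in_out_nbrs_Centre finite_out_nbrs repro_prob_Centre_Res[OF assms(1)] by simp
qed

lemma moran_trans_reservoir_to_empty:
  "1 / (real l * real m) / total_fitness (megastar_V k l m) r {Res i j} \<le>
    moran_trans (megastar_V k l m) (megastar_E k l m) r {Res i j} {}"
  using moran_trans_ge_repro_prob[OF Centre_in_V Res_in_out_nbrs_Centre, of "{Res i j}" "{}"]
  by (simp add: moran_update_def repro_prob_Centre_Res)

lemma moran_trans_reservoir_to_feeder:
  "r / total_fitness (megastar_V k l m) r {Res i j} \<le>
    moran_trans (megastar_V k l m) (megastar_E k l m) r {Res i j} {Feeder i, Res i j}"
  using moran_trans_ge_sum_fitness[of "{Res i j}" "{Res i j}" "{Feeder i, Res i j}"]
    Res_in_V i_less j_less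
  by (simp add: out_nbrs_megastar_Res moran_update_def fitness_def)

lemma moran_trans_reservoir_stay:
  "1 - (r + 1 / (real l * real m)) / total_fitness (megastar_V k l m) r {Res i j} \<le>
    moran_trans (megastar_V k l m) (megastar_E k l m) r {Res i j} {Res i j}"
proof -
  let ?S = "{Res i j}"
  let ?change = "change_prob (megastar_V k l m) (megastar_E k l m) r ?S"
  have "moran_trans (megastar_V k l m) (megastar_E k l m) r ?S ?S = 1 - (?change (Res i j) + ?change Centre)"
  proof (subst moran_trans_self)
    show "{Res i j, Centre} \<subseteq> megastar_V k l m" using Res_in_V Centre_in_V by simp
    show "moran_update ?S v w = ?S"
      if "v \<in> megastar_V k l m - {Res i j, Centre}" and "w \<in> out_nbrs (megastar_E k l m) v" for v w
      using that Res_in_out_nbrs_megastar by (fastforce simp: moran_update_def)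
  qed simp
  moreover have "?change (Res i j) \<le> r / total_fitness (megastar_V k l m) r ?S"
    using change_prob_le[OF Res_in_V, of ?S] by (simp add: fitness_def)
  moreover have "?change Centre = 1 / (real l * real m) / total_fitness (megastar_V k l m) r ?S"
    using Res_in_out_nbrs_Centre by (intro change_prob_Centre) auto
  ultimately show ?thesis by (simp add: add_divide_distrib)
qed

lemma moran_trans_feeder_to_lone_feeder_pos:
  "0 < moran_trans (megastar_V k l m) (megastar_E k l m) r {Feeder i, Res i j} {Feeder i}"
proof -
  have "moran_update {Feeder i, Res i j} Centre (Res i j) = {Feeder i}"
    by (auto simp: moran_update_def)
  then have "repro_prob (megastar_V k l m) (megastar_E k l m) r {Feeder i, Res i j} Centre (Res i j)
      \<le> moran_trans (megastar_V k l m) (megastar_E k l m) r {Feeder i, Res i j} {Feeder i}"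
    by (rule moran_trans_ge_repro_prob[OF Centre_in_V Res_in_out_nbrs_Centre])
  moreover have "0 < repro_prob (megastar_V k l m) (megastar_E k l m) r {Feeder i, Res i j} Centre (Res i j)"
    using l_pos m_pos total_fitness_pos by (simp add: repro_prob_Centre_Res)
  ultimately show ?thesis by linarith
qed

lemma card_other_reservoir_vertices: "card (Res i ` ({..<m} - {j})) = m - 1"
  using j_less by (simp add: card_image inj_on_def)

lemma moran_trans_feeder_to_reservoir:
  "(real m - 1) / total_fitness (megastar_V k l m) r {Feeder i, Res i j} \<le>
    moran_trans (megastar_V k l m) (megastar_E k l m) r {Feeder i, Res i j} {Res i j}"
proof -
  let ?S = "{Feeder i, Res i j}"
  have "(\<Sum>v\<in>Res i ` ({..<m} - {j}). fitness r ?S v / total_fitness (megastar_V k l m) r ?S) \<le>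
      moran_trans (megastar_V k l m) (megastar_E k l m) r ?S {Res i j}"
    using i_less by (intro moran_trans_ge_sum_fitness)
      (auto simp: megastar_V_def out_nbrs_megastar_Res moran_update_def)
  moreover have "(\<Sum>v\<in>Res i ` ({..<m} - {j}). fitness r ?S v / total_fitness (megastar_V k l m) r ?S)
      = (\<Sum>v\<in>Res i ` ({..<m} - {j}). 1 / total_fitness (megastar_V k l m) r ?S)"
    by (intro sum.cong) (auto simp: fitness_def)
  ultimately show ?thesis
    using card_other_reservoir_vertices m_pos by (simp add: of_nat_diff)
qed

lemma moran_trans_feeder_self:
  "moran_trans (megastar_V k l m) (megastar_E k l m) r {Feeder i, Res i j} {Feeder i, Res i j} =
    1 - (\<Sum>v\<in>insert (Feeder i) (insert Centre (Res i ` ({..<m} - {j}))).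
      change_prob (megastar_V k l m) (megastar_E k l m) r {Feeder i, Res i j} v)"
proof (rule moran_trans_self)
  let ?S = "{Feeder i, Res i j}" and ?A = "Res i ` ({..<m} - {j})"
  show "insert (Feeder i) (insert Centre ?A) \<subseteq> megastar_V k l m"
    using Feeder_in_V Centre_in_V i_less by (auto simp: megastar_V_def)
  show "moran_update ?S v w = ?S"
    if v: "v \<in> megastar_V k l m - insert (Feeder i) (insert Centre ?A)"
      and w: "w \<in> out_nbrs (megastar_E k l m) v" for v w
  proof -
    have "w \<noteq> Res i j" using v w Res_in_out_nbrs_megastar by blast
    moreover have "v \<in> ?S" if "w = Feeder i"
      using v w Feeder_in_out_nbrs_megastar[of i k l m v] that by auto
    moreover have "w = Feeder i" if "v = Res i j"
      using w that i_less j_less by (simp add: out_nbrs_megastar_Res)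
    ultimately show ?thesis using v by (auto simp: moran_update_def)
  qed
qed

lemma moran_trans_feeder_stay:
  "1 - (real m - 1 + r + 1 / (real l * real m)) / total_fitness (megastar_V k l m) r {Feeder i, Res i j}
    \<le> moran_trans (megastar_V k l m) (megastar_E k l m) r {Feeder i, Res i j} {Feeder i, Res i j}"
proof -
  let ?S = "{Feeder i, Res i j}" and ?A = "Res i ` ({..<m} - {j})"
  let ?W = "total_fitness (megastar_V k l m) r ?S"
  let ?change = "change_prob (megastar_V k l m) (megastar_E k l m) r ?S"
  have A_sub: "?A \<subseteq> megastar_V k l m" using i_less by (auto simp: megastar_V_def)
  have "moran_trans (megastar_V k l m) (megastar_E k l m) r ?S ?S =
      1 - (\<Sum>v\<in>insert (Feeder i) (insert Centre ?A). ?change v)"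
    by (rule moran_trans_feeder_self)
  also have "\<dots> = 1 - (?change (Feeder i) + ?change Centre + (\<Sum>v\<in>?A. ?change v))"
    by (simp add: image_iff add.assoc)
  also have "\<dots> \<ge> 1 - (r / ?W + 1 / (real l * real m) / ?W + (\<Sum>v\<in>?A. 1 / ?W))"
  proof -
    have "?change (Feeder i) \<le> r / ?W"
      using change_prob_le[OF Feeder_in_V, of ?S] by (simp add: fitness_def)
    moreover have "?change Centre = 1 / (real l * real m) / ?W"
      using Res_in_out_nbrs_Centre by (intro change_prob_Centre) (auto simp: out_nbrs_megastar_Centre)
    moreover have "?change v \<le> 1 / ?W" if "v \<in> ?A" for v
    proof -
      have "v \<notin> ?S" using that by auto
      then show ?thesis using that A_sub change_prob_le[of v ?S] by (auto simp: fitness_def)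
    qed
    ultimately show ?thesis by (smt (verit) sum_mono)
  qed
  finally show ?thesis
    using card_other_reservoir_vertices m_pos by (simp add: add_divide_distrib of_nat_diff)
qed

lemma sum_moran_trans_reservoir_states_less_one:
  assumes "S \<in> {{Res i j}, {Feeder i, Res i j}}"
  shows "(\<Sum>S'\<in>{{Res i j}, {Feeder i, Res i j}}.
    moran_trans (megastar_V k l m) (megastar_E k l m) r S S') < 1"
proof -
  have "0 < moran_trans (megastar_V k l m) (megastar_E k l m) r {Res i j} {}"
    using moran_trans_reservoir_to_empty total_fitness_pos l_pos m_pos
    by (smt (verit) divide_pos_pos of_nat_0_less_iff mult_pos_pos)
  note to_empty = this
  have T_sub: "{{Res i j}, {Feeder i, Res i j}} \<subseteq> Pow (megastar_V k l m)"
    using Res_in_V Feeder_in_V by auto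
  from assms consider "S = {Res i j}" | "S = {Feeder i, Res i j}" by blast
  then show ?thesis
  proof cases
    case 1
    show ?thesis unfolding 1 by (rule sum_moran_trans_less_one[OF T_sub _ to_empty]) auto
  next
    case 2
    show ?thesis unfolding 2
      by (rule sum_moran_trans_less_one[OF T_sub _ moran_trans_feeder_to_lone_feeder_pos])
        (use Feeder_in_V in \<open>auto simp: doubleton_eq_iff\<close>)
  qed
qed

lemma reservoir_state_subharmonic:
  fixes c g :: real
  defines "\<epsilon> \<equiv> 1 / (real l * real m)"
  assumes "0 \<le> c" and "0 \<le> g" and "(r + \<epsilon>) * c \<le> \<epsilon> + r * g"
  shows "c \<le> moran_trans (megastar_V k l m) (megastar_E k l m) r {Res i j} {}
    + moran_trans (megastar_V k l m) (megastar_E k l m) r {Res i j} {Res i j} * c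
    + moran_trans (megastar_V k l m) (megastar_E k l m) r {Res i j} {Feeder i, Res i j} * g"
proof -
  let ?W = "total_fitness (megastar_V k l m) r {Res i j}"
  have "c \<le> c + (\<epsilon> + r * g - (r + \<epsilon>) * c) / ?W"
    using assms(4) total_fitness_pos by (simp add: less_imp_le)
  also have "\<dots> = \<epsilon> / ?W + (1 - (r + \<epsilon>) / ?W) * c + r / ?W * g"
    using total_fitness_pos[of "{Res i j}"] by (simp add: field_simps)
  also have "\<dots> \<le> moran_trans (megastar_V k l m) (megastar_E k l m) r {Res i j} {}
    + moran_trans (megastar_V k l m) (megastar_E k l m) r {Res i j} {Res i j} * c
    + moran_trans (megastar_V k l m) (megastar_E k l m) r {Res i j} {Feeder i, Res i j} * g"
    unfolding \<epsilon>_def using assms(2,3)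
    by (intro add_mono mult_right_mono moran_trans_reservoir_to_empty moran_trans_reservoir_stay
        moran_trans_reservoir_to_feeder)
  finally show ?thesis .
qed

lemma feeder_state_subharmonic:
  fixes c g :: real
  defines "\<epsilon> \<equiv> 1 / (real l * real m)"
  assumes "0 \<le> c" and "0 \<le> g" and "(real m - 1 + r + \<epsilon>) * g \<le> (real m - 1) * c"
  shows "g \<le> moran_trans (megastar_V k l m) (megastar_E k l m) r {Feeder i, Res i j} {Res i j} * c
    + moran_trans (megastar_V k l m) (megastar_E k l m) r {Feeder i, Res i j} {Feeder i, Res i j} * g"
proof -
  let ?W = "total_fitness (megastar_V k l m) r {Feeder i, Res i j}"
  have "g \<le> g + ((real m - 1) * c - (real m - 1 + r + \<epsilon>) * g) / ?W"
    using assms(4) total_fitness_pos by (simp add: less_imp_le)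
  also have "\<dots> = (real m - 1) / ?W * c + (1 - (real m - 1 + r + \<epsilon>) / ?W) * g"
    using total_fitness_pos[of "{Feeder i, Res i j}"] by (simp add: field_simps)
  also have "\<dots> \<le> moran_trans (megastar_V k l m) (megastar_E k l m) r {Feeder i, Res i j} {Res i j} * c
    + moran_trans (megastar_V k l m) (megastar_E k l m) r {Feeder i, Res i j} {Feeder i, Res i j} * g"
    unfolding \<epsilon>_def using assms(2,3)
    by (intro add_mono mult_right_mono moran_trans_feeder_to_reservoir moran_trans_feeder_stay)
  finally show ?thesis .
qed

lemma reservoir_extinction_ge:
  fixes c g :: real
  defines "\<epsilon> \<equiv> 1 / (real l * real m)"
  assumes "0 \<le> g" and "g \<le> c" and "c \<le> 1"
    and reservoir: "(r + \<epsilon>) * c \<le> \<epsilon> + r * g"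
    and feeder: "(real m - 1 + r + \<epsilon>) * g \<le> (real m - 1) * c"
  shows "c \<le> moran_extinction (megastar_V k l m) (megastar_E k l m) r {Res i j}"
proof -
  define h where "h S = (if S = {Res i j} then c else if S = {Feeder i, Res i j} then g else 0)" for S
  let ?T = "{{Res i j}, {Feeder i, Res i j}}"
  have "h {Res i j} \<le> moran_extinction (megastar_V k l m) (megastar_E k l m) r {Res i j}"
  proof (rule extinction_ge_minorant[of ?T])
    show "?T \<subseteq> Pow (megastar_V k l m)" using Res_in_V Feeder_in_V by auto
    show "h S \<le> moran_trans (megastar_V k l m) (megastar_E k l m) r S {}
      + (\<Sum>S'\<in>?T. moran_trans (megastar_V k l m) (megastar_E k l m) r S S' * h S')" if "S \<in> ?T" for S
      using that assms(2,3) reservoir_state_subharmonic[OF _ _ reservoir[unfolded \<epsilon>_def]]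
        feeder_state_subharmonic[OF _ _ feeder[unfolded \<epsilon>_def]] moran_trans_nonneg[of S "{}"]
      by (auto simp: h_def doubleton_eq_iff)
    show "h S \<le> 1" if "S \<in> ?T" for S
      using that assms(3,4) by (auto simp: h_def)
  qed (fact sum_moran_trans_reservoir_states_less_one | simp)+
  then show ?thesis by (simp add: h_def)
qed

end

lemma megastar_weight_inequality:
  fixes r L N :: real
  assumes r: "1 < r" and L: "1 \<le> L" and N: "1 \<le> N"
  defines "\<epsilon> \<equiv> 1 / (L * N)" and "c \<equiv> 1 / (26 * r^2 * L)"
  shows "(r + \<epsilon>) * c \<le> \<epsilon> + r * (c * (N - 1) / (N - 1 + r + \<epsilon>))"
proof -
  let ?M = "N - 1 + r + \<epsilon>"
  have "0 < \<epsilon>" "\<epsilon> \<le> 1"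
    using mult_mono[OF L N] L by (auto simp: \<epsilon>_def field_simps)
  then have "N \<le> ?M" using r by simp
  have "c \<le> 1 / 26"
    using mult_mono[OF one_le_power[of r 2] L] r by (simp add: c_def field_simps)
  have "r * c * (r + \<epsilon>) / ?M = (r + \<epsilon>) / (26 * r * L * ?M)"
    using r L by (simp add: c_def power2_eq_square field_simps)
  also have "\<dots> \<le> (2 * r) / (26 * r * L * N)"
    using \<open>N \<le> ?M\<close> \<open>\<epsilon> \<le> 1\<close> r L N by (intro frac_le) auto
  also have "\<dots> = 2 / 26 * \<epsilon>" using r by (simp add: \<epsilon>_def field_simps)
  finally have "r * c * (r + \<epsilon>) / ?M \<le> 2 / 26 * \<epsilon>" .
  moreover have "\<epsilon> * c \<le> \<epsilon> / 26" using \<open>c \<le> 1 / 26\<close> \<open>0 < \<epsilon>\<close> by (simp add: mult_left_mono)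
  moreover have "r * (c * (N - 1) / ?M) = r * c - r * c * (r + \<epsilon>) / ?M"
    using \<open>N \<le> ?M\<close> N by (simp add: field_simps)
  moreover have "(r + \<epsilon>) * c = r * c + \<epsilon> * c" by (simp add: algebra_simps)
  ultimately show ?thesis using \<open>0 < \<epsilon>\<close> by linarith
qed

theorem lemma7p2:
  fixes r :: real and k l m i j :: nat
  assumes "r > 1" and "k > 0" and "l > 0" and "m > 0"
    and "real m \<ge> 12 * r"
    and "i < l" and "j < m"
  shows "moran_extinction (megastar_V k l m) (megastar_E k l m) r {Res i j}
           \<ge> 1 / (26 * r^2 * real l)"
proof -
  interpret megastar_reservoir k l m i j r using assms by unfold_locales
  define \<epsilon> where "\<epsilon> = 1 / (real l * real m)"
  define c where "c = 1 / (26 * r^2 * real l)"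
  define g where "g = c * (real m - 1) / (real m - 1 + r + \<epsilon>)"
  have "0 < \<epsilon>" "0 < c" using assms by (simp_all add: \<epsilon>_def c_def)
  have "c \<le> 1"
    using mult_mono[OF one_le_power[of r 2], of 1 "real l"] assms by (simp add: c_def field_simps)
  moreover have "0 \<le> g" "g \<le> c" using \<open>0 < c\<close> \<open>0 < \<epsilon>\<close> assms by (auto simp: g_def field_simps)
  moreover have "(r + \<epsilon>) * c \<le> \<epsilon> + r * g"
    unfolding \<epsilon>_def c_def g_def using assms megastar_weight_inequality[of r "real l" "real m"] by simp
  moreover have "(real m - 1 + r + \<epsilon>) * g \<le> (real m - 1) * c"
    using \<open>0 < \<epsilon>\<close> assms by (simp add: g_def)
  ultimately show ?thesis
    using reservoir_extinction_ge[of g c] by (simp add: \<epsilon>_def c_def)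
qed

end
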